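(* In the setting of the context, consider the two families of linear inequalities $$x_t-x_{t-k}\le(\underline C+(k-m)V-\overline V)y_{t+m+1}+V\sum_{i=1}^m y_{t+i}+\overline V y_t-\underline C y_{t-k}-\sum_{s\in\mathcal S}(\underline C+(k-s)V-\overline V)(y_{t-s}-y_{t-s-1}),$$ indexed by all $k\in[1,T-1]_{\mathbb Z}$ with $\overline C-\underline C-kV>0$, $m\in[0,k-1]_{\mathbb Z}$, $\mathcal S\subseteq[0,\min\{k-1,L-m-2\}]_{\mathbb Z}$ and $t\in[k+1,T-m-1]_{\mathbb Z}$, and $$x_t-x_{t+k}\le(\underline C+(k-m)V-\overline V)y_{t-m-1}+V\sum_{i=1}^m y_{t-i}+\overline V y_t-\underline C y_{t+k}-\sum_{s\in\mathcal S}(\underline C+(k-s)V-\overline V)(y_{t+s}-y_{t+s+1}),$$ indexed by the same $k,m,\mathcal S$ and $t\in[m+2,T-k]_{\mathbb Z}$. For any given point $(\mathbf x,\mathbf y)\in\mathbb R_+^{2T}$, a most violated inequality of each family can be determined in $O(T^3)$ time if a violated inequality of that family exists.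
   Context: For integers $a,b$, $[a,b]_{\mathbb Z}=\{a,a+1,\dots,b\}$ if $a\le b$ and $\emptyset$ otherwise. Fix a positive integer $T$, a positive integer $L$ (minimum up time), and reals $\overline C,\underline C,V,\overline V$ with $\overline C>\underline C>0$, $V>0$, $\overline V+V\le\overline C$ and $\underline C<\overline V<\underline C+V$; $\mathbf x=(x_1,\dots,x_T)$, $\mathbf y=(y_1,\dots,y_T)$. For an inequality $a^\top(\mathbf x,\mathbf y)\le b$, its violation at a given point is $a^\top(\mathbf x,\mathbf y)-b$; it is violated if this is positive, and a most violated inequality of a family is one maximizing this quantity over the family. Time is measured in arithmetic operations and comparisons on the input numbers. *)

theory Defs
  imports Main "HOL.Real"
begin

section \<open>A real-RAM cost model (arithmetic operations and comparisons count 1)\<close>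

text \<open>Real values can only be obtained
from the input or by arithmetic on reals / integer-to-real conversion (no
arbitrary real constants, no floor), so real numbers are only used through
arithmetic operations and comparisons.\<close>

record state =
  ir :: "nat \<Rightarrow> int"
  rr :: "nat \<Rightarrow> real"
  im :: "int \<Rightarrow> int"
  rm :: "int \<Rightarrow> real"

datatype instr =
    IConst nat int
  | IAdd nat nat nat
  | ISub nat nat nat
  | IMul nat nat nat
  | OfInt nat nat
  | RAdd nat nat nat
  | RSub nat nat nat
  | RMul nat nat nat
  | RDiv nat nat nat
  | RLoad nat nat
  | RStore nat nat
  | ILoad nat nat
  | IStore nat nat

datatype cond =
    ILess nat nat | IEq nat nat | RLess nat nat | RLeq nat nat

datatype prog =
    Skip | Instr instr | Seq prog prog | If cond prog prog | While cond prog

fun step :: "instr \<Rightarrow> state \<Rightarrow> state" where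
  "step (IConst d c) s = s\<lparr>ir := (ir s)(d := c)\<rparr>"
| "step (IAdd d a b) s = s\<lparr>ir := (ir s)(d := ir s a + ir s b)\<rparr>"
| "step (ISub d a b) s = s\<lparr>ir := (ir s)(d := ir s a - ir s b)\<rparr>"
| "step (IMul d a b) s = s\<lparr>ir := (ir s)(d := ir s a * ir s b)\<rparr>"
| "step (OfInt d a) s = s\<lparr>rr := (rr s)(d := real_of_int (ir s a))\<rparr>"
| "step (RAdd d a b) s = s\<lparr>rr := (rr s)(d := rr s a + rr s b)\<rparr>"
| "step (RSub d a b) s = s\<lparr>rr := (rr s)(d := rr s a - rr s b)\<rparr>"
| "step (RMul d a b) s = s\<lparr>rr := (rr s)(d := rr s a * rr s b)\<rparr>"
| "step (RDiv d a b) s = s\<lparr>rr := (rr s)(d := rr s a / rr s b)\<rparr>"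
| "step (RLoad d a) s = s\<lparr>rr := (rr s)(d := rm s (ir s a))\<rparr>"
| "step (RStore a b) s = s\<lparr>rm := (rm s)(ir s a := rr s b)\<rparr>"
| "step (ILoad d a) s = s\<lparr>ir := (ir s)(d := im s (ir s a))\<rparr>"
| "step (IStore a b) s = s\<lparr>im := (im s)(ir s a := ir s b)\<rparr>"

fun holds :: "cond \<Rightarrow> state \<Rightarrow> bool" where
  "holds (ILess a b) s = (ir s a < ir s b)"
| "holds (IEq a b) s = (ir s a = ir s b)"
| "holds (RLess a b) s = (rr s a < rr s b)"
| "holds (RLeq a b) s = (rr s a \<le> rr s b)"

inductive exec :: "prog \<Rightarrow> state \<Rightarrow> nat \<Rightarrow> state \<Rightarrow> bool" where
  exec_Skip: "exec Skip s 0 s"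
| exec_Instr: "exec (Instr i) s 1 (step i s)"
| exec_Seq: "exec p s n s' \<Longrightarrow> exec q s' m s'' \<Longrightarrow> exec (Seq p q) s (n + m) s''"
| exec_IfT: "holds c s \<Longrightarrow> exec p s n s' \<Longrightarrow> exec (If c p q) s (n + 1) s'"
| exec_IfF: "\<not> holds c s \<Longrightarrow> exec q s n s' \<Longrightarrow> exec (If c p q) s (n + 1) s'"
| exec_WhileF: "\<not> holds c s \<Longrightarrow> exec (While c p) s 1 s"
| exec_WhileT: "holds c s \<Longrightarrow> exec p s n s' \<Longrightarrow> exec (While c p) s' m s''
                 \<Longrightarrow> exec (While c p) s (n + m + 1) s''"

text \<open>Input encoding: integer registers 0,1 hold T and L; real registers
0..3 hold Cbar, Cund, V, Vbar; real memory cell t holds x_t and cell T+t holds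
y_t (1 \<le> t \<le> T); everything else is 0.\<close>

definition init_state ::
  "nat \<Rightarrow> nat \<Rightarrow> real \<Rightarrow> real \<Rightarrow> real \<Rightarrow> real \<Rightarrow> (int \<Rightarrow> real) \<Rightarrow> (int \<Rightarrow> real) \<Rightarrow> state" where
  "init_state T L Cb Cu V Vb x y =
     \<lparr> ir = (\<lambda>_. 0)(0 := int T, 1 := int L),
       rr = (\<lambda>_. 0)(0 := Cb, 1 := Cu, 2 := V, 3 := Vb),
       im = (\<lambda>_. 0),
       rm = (\<lambda>a. if 1 \<le> a \<and> a \<le> int T then x a
                 else if int T + 1 \<le> a \<and> a \<le> 2 * int T then y (a - int T) else 0) \<rparr>"

text \<open>Output decoding: integer registers 0,1,2 hold k, m, t; the set S is
the support of the integer memory.\<close>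

definition output_index :: "state \<Rightarrow> int \<times> int \<times> int set \<times> int" where
  "output_index s = (ir s 0, ir s 1, {a. im s a \<noteq> 0}, ir s 2)"

definition Fam :: "nat \<Rightarrow> nat \<Rightarrow> nat \<Rightarrow> real \<Rightarrow> real \<Rightarrow> real \<Rightarrow> (int \<times> int \<times> int set \<times> int) set" where
  "Fam j T L Cb Cu V =
     {(k, m, S, t). 1 \<le> k \<and> k \<le> int T - 1 \<and> Cb - Cu - of_int k * V > 0
        \<and> 0 \<le> m \<and> m \<le> k - 1 \<and> S \<subseteq> {0 .. min (k - 1) (int L - m - 2)}
        \<and> (if j = 1 then k + 1 \<le> t \<and> t \<le> int T - m - 1
                    else m + 2 \<le> t \<and> t \<le> int T - k)}"

definition Viol :: "nat \<Rightarrow> real \<Rightarrow> real \<Rightarrow> real \<Rightarrow> (int \<Rightarrow> real) \<Rightarrow> (int \<Rightarrow> real)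
                    \<Rightarrow> int \<times> int \<times> int set \<times> int \<Rightarrow> real" where
  "Viol j Cu V Vb x y idx = (case idx of (k, m, S, t) \<Rightarrow>
     if j = 1 then
       x t - x (t - k)
       - ((Cu + of_int (k - m) * V - Vb) * y (t + m + 1)
          + V * (\<Sum>i\<in>{1..m}. y (t + i)) + Vb * y t - Cu * y (t - k)
          - (\<Sum>s\<in>S. (Cu + of_int (k - s) * V - Vb) * (y (t - s) - y (t - s - 1))))
     else
       x t - x (t + k)
       - ((Cu + of_int (k - m) * V - Vb) * y (t - m - 1)
          + V * (\<Sum>i\<in>{1..m}. y (t - i)) + Vb * y t - Cu * y (t + k)
          - (\<Sum>s\<in>S. (Cu + of_int (k - s) * V - Vb) * (y (t + s) - y (t + s + 1)))))"

end

theory Submission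
  imports Defs
begin

(* For fixed k, m and t the violation is affine in the indicator of S, the coefficient of
   y (t - s) - y (t - s - 1) being Cu + (k - s) V - Vb, which is positive since s < k and
   Vb < Cu + V.  Hence the best S consists of the s with y (t - s) > y (t - s - 1), and the best
   violation over all S is a closed form in the positive parts of these increments.  The program
   enumerates the O(T^2) pairs (k, t); for each it tabulates the prefix sums of the weighted positive
   parts in O(T) and then scans m at constant cost per step, maintaining y (t + 1) + ... + y (t + m)
   incrementally; at the end it writes out the best S of the winning triple.  The second family is the
   first one for the time-reversed data u |-> T + 1 - u, which the same program reads with address
   stride -1. *)

definition runs :: "prog \<Rightarrow> state \<Rightarrow> nat \<Rightarrow> (state \<Rightarrow> bool) \<Rightarrow> bool" where
  "runs p s b Q \<longleftrightarrow> (\<exists>n s'. exec p s n s' \<and> n \<le> b \<and> Q s')"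

fun loop_free :: "prog \<Rightarrow> bool" where
  "loop_free (Seq p q) = (loop_free p \<and> loop_free q)"
| "loop_free (If c p q) = (loop_free p \<and> loop_free q)"
| "loop_free (While c p) = False"
| "loop_free _ = True"

fun run_loop_free :: "prog \<Rightarrow> state \<Rightarrow> state" where
  "run_loop_free Skip s = s"
| "run_loop_free (Instr i) s = step i s"
| "run_loop_free (Seq p q) s = run_loop_free q (run_loop_free p s)"
| "run_loop_free (If c p q) s = (if holds c s then run_loop_free p s else run_loop_free q s)"
| "run_loop_free (While c p) s = s"

fun cost_loop_free :: "prog \<Rightarrow> nat" where
  "cost_loop_free Skip = 0"
| "cost_loop_free (Instr i) = 1"
| "cost_loop_free (Seq p q) = cost_loop_free p + cost_loop_free q"
| "cost_loop_free (If c p q) = max (cost_loop_free p) (cost_loop_free q) + 1"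
| "cost_loop_free (While c p) = 0"

lemma exec_run_loop_free:
  "loop_free p \<Longrightarrow> \<exists>n. exec p s n (run_loop_free p s) \<and> n \<le> cost_loop_free p"
proof (induction p arbitrary: s)
  case (Seq p q)
  then obtain n1 n2 where "exec p s n1 (run_loop_free p s)" "n1 \<le> cost_loop_free p"
    and "exec q (run_loop_free p s) n2 (run_loop_free q (run_loop_free p s))" "n2 \<le> cost_loop_free q"
    by fastforce
  then show ?case by (auto intro: exec_Seq)
next
  case (If c p q)
  then show ?case by (cases "holds c s") (fastforce intro: exec_IfT exec_IfF)+
qed (auto intro: exec_Skip exec_Instr)

lemma runs_loop_free:
  "loop_free p \<Longrightarrow> cost_loop_free p \<le> b \<Longrightarrow> Q (run_loop_free p s) \<Longrightarrow> runs p s b Q"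
  unfolding runs_def using exec_run_loop_free by (meson le_trans)

lemma runs_mono: "runs p s b Q \<Longrightarrow> b \<le> b' \<Longrightarrow> (\<And>s. Q s \<Longrightarrow> Q' s) \<Longrightarrow> runs p s b' Q'"
  unfolding runs_def by (meson le_trans)

lemma runs_Skip: "Q s \<Longrightarrow> runs Skip s b Q"
  unfolding runs_def by (auto intro: exec_Skip)

lemma runs_Seq:
  assumes "runs p s b1 R" and "\<And>s'. R s' \<Longrightarrow> runs q s' b2 Q"
  shows "runs (Seq p q) s (b1 + b2) Q"
proof -
  obtain n1 s1 where 1: "exec p s n1 s1" "n1 \<le> b1" "R s1"
    using assms(1) unfolding runs_def by blast
  obtain n2 s2 where "exec q s1 n2 s2" "n2 \<le> b2" "Q s2"
    using assms(2)[OF \<open>R s1\<close>] unfolding runs_def by blast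
  with 1 show ?thesis unfolding runs_def by (meson add_mono exec_Seq)
qed

lemma runs_If:
  "(holds c s \<Longrightarrow> runs p s b Q) \<Longrightarrow> (\<not> holds c s \<Longrightarrow> runs q s b Q) \<Longrightarrow> runs (If c p q) s (b + 1) Q"
  unfolding runs_def by (metis add_le_mono1 exec_IfF exec_IfT)

lemma runs_While_variant:
  assumes body: "\<And>s. I s \<Longrightarrow> holds c s \<Longrightarrow> runs p s b (\<lambda>s'. I s' \<and> f s' < f s)"
  shows "I s \<Longrightarrow> runs (While c p) s ((f s + 1) * (b + 1)) (\<lambda>s'. I s' \<and> \<not> holds c s')"
proof (induction "f s" arbitrary: s rule: less_induct)
  case less
  show ?case
  proof (cases "holds c s")
    case True
    from body[OF less.prems True] obtain n s1 where s1: "exec p s n s1" "n \<le> b" "I s1" "f s1 < f s"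
      unfolding runs_def by auto
    from less.hyps[OF s1(4) s1(3)] obtain m s2 where s2: "exec (While c p) s1 m s2"
      "m \<le> (f s1 + 1) * (b + 1)" "I s2" "\<not> holds c s2"
      unfolding runs_def by auto
    have "(f s1 + 1) * (b + 1) \<le> f s * (b + 1)"
      using s1(4) by (intro mult_right_mono) auto
    then have "n + m + 1 \<le> (f s + 1) * (b + 1)"
      using s1(2) s2(2) by (simp add: algebra_simps)
    then show ?thesis
      unfolding runs_def using exec_WhileT[OF True s1(1) s2(1)] s2(3,4) by blast
  next
    case False
    then show ?thesis
      unfolding runs_def using exec_WhileF[OF False] less.prems by fastforce
  qed
qed

lemma runs_While:
  assumes "\<And>s. I s \<Longrightarrow> holds c s \<Longrightarrow> runs p s b (\<lambda>s'. I s' \<and> f s' < f s)"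
    and "I s" and "f s \<le> N" and "(N + 1) * (b + 1) \<le> b'"
    and "\<And>s. I s \<Longrightarrow> \<not> holds c s \<Longrightarrow> Q s"
  shows "runs (While c p) s b' Q"
proof (rule runs_mono[OF runs_While_variant[of I c p b f, OF assms(1) assms(2)]])
  have "(f s + 1) * (b + 1) \<le> (N + 1) * (b + 1)"
    using assms(3) by (intro mult_right_mono) auto
  then show "(f s + 1) * (b + 1) \<le> b'" using assms(4) by linarith
qed (use assms(5) in auto)

section \<open>The best choice of S\<close>

definition violated ::
  "nat \<Rightarrow> nat \<Rightarrow> nat \<Rightarrow> real \<Rightarrow> real \<Rightarrow> real \<Rightarrow> real \<Rightarrow> (int \<Rightarrow> real) \<Rightarrow> (int \<Rightarrow> real) \<Rightarrow> bool" where
  "violated j T L Cb Cu V Vb x y \<longleftrightarrow> (\<exists>idx\<in>Fam j T L Cb Cu V. Viol j Cu V Vb x y idx > 0)"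

definition most_violated ::
  "nat \<Rightarrow> nat \<Rightarrow> nat \<Rightarrow> real \<Rightarrow> real \<Rightarrow> real \<Rightarrow> real \<Rightarrow> (int \<Rightarrow> real) \<Rightarrow> (int \<Rightarrow> real)
    \<Rightarrow> int \<times> int \<times> int set \<times> int \<Rightarrow> bool" where
  "most_violated j T L Cb Cu V Vb x y idx \<longleftrightarrow> idx \<in> Fam j T L Cb Cu V
     \<and> (\<forall>i\<in>Fam j T L Cb Cu V. Viol j Cu V Vb x y i \<le> Viol j Cu V Vb x y idx)"

locale separation_data =
  fixes T L :: nat and Cb Cu V Vb :: real and X Y :: "int \<Rightarrow> real"
  assumes T_pos: "0 < T" and V_pos: "0 < V" and Vb_lt: "Vb < Cu + V"
begin

definition weight :: "int \<Rightarrow> int \<Rightarrow> real" where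
  "weight k s = Cu + of_int (k - s) * V - Vb"

definition gain :: "int \<Rightarrow> int \<Rightarrow> int \<Rightarrow> real" where
  "gain k t M = (\<Sum>s\<in>{0..M}. weight k s * max 0 (Y (t - s) - Y (t - s - 1)))"

definition sum_ahead :: "int \<Rightarrow> int \<Rightarrow> real" where
  "sum_ahead m t = (\<Sum>i\<in>{1..m}. Y (t + i))"

definition triples :: "(int \<times> int \<times> int) set" where
  "triples = {(k, m, t). 1 \<le> k \<and> k \<le> int T - 1 \<and> Cb - Cu - of_int k * V > 0 \<and> 0 \<le> m \<and> m \<le> k - 1
      \<and> k + 1 \<le> t \<and> t \<le> int T - m - 1}"

definition best_viol :: "int \<times> int \<times> int \<Rightarrow> real" where
  "best_viol p = (case p of (k, m, t) \<Rightarrow> X t - X (t - k)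
     - ((Cu + of_int (k - m) * V - Vb) * Y (t + m + 1) + V * sum_ahead m t + Vb * Y t - Cu * Y (t - k))
     + gain k t (min (k - 1) (int L - m - 2)))"

definition best_S :: "int \<Rightarrow> int \<Rightarrow> int \<Rightarrow> int set" where
  "best_S k m t = {s \<in> {0..min (k - 1) (int L - m - 2)}. Y (t - s - 1) < Y (t - s)}"

lemma weight_pos: "s < k \<Longrightarrow> 0 < weight k s"
proof -
  assume "s < k"
  then have "V \<le> of_int (k - s) * V" using V_pos by simp
  then show ?thesis unfolding weight_def using Vb_lt by simp
qed

lemma gain_neg: "M < 0 \<Longrightarrow> gain k t M = 0"
  unfolding gain_def by simp

lemma gain_max_neg1: "gain k t (max (-1) M) = gain k t M"
  by (cases "M < -1") (auto simp: gain_neg max_def)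

lemma gain_step:
  assumes "0 \<le> M"
  shows "gain k t M = (if Y (t - M - 1) < Y (t - M)
    then gain k t (M - 1) + weight k M * (Y (t - M) - Y (t - M - 1)) else gain k t (M - 1))"
proof -
  have "{0..M} = insert M {0..M - 1}" using assms by auto
  then show ?thesis unfolding gain_def by simp
qed

lemma sum_ahead_step: "0 \<le> m \<Longrightarrow> sum_ahead (m + 1) t = sum_ahead m t + Y (t + m + 1)"
proof -
  assume "0 \<le> m"
  then have "{1..m + 1} = insert (m + 1) {1..m}" by auto
  then show ?thesis unfolding sum_ahead_def by (simp add: add.commute add.left_commute)
qed

lemma Fam_1_eq:
  "Fam 1 T L Cb Cu V = {(k, m, S, t). (k, m, t) \<in> triples \<and> S \<subseteq> {0..min (k - 1) (int L - m - 2)}}"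
  unfolding Fam_def triples_def by auto

lemma Viol_1_eq: "Viol 1 Cu V Vb X Y (k, m, S, t) = X t - X (t - k)
     - ((Cu + of_int (k - m) * V - Vb) * Y (t + m + 1) + V * sum_ahead m t + Vb * Y t - Cu * Y (t - k))
     + (\<Sum>s\<in>S. weight k s * (Y (t - s) - Y (t - s - 1)))"
  unfolding Viol_def sum_ahead_def weight_def by simp

lemma Viol_1_le_best_viol:
  assumes S: "S \<subseteq> {0..min (k - 1) (int L - m - 2)}"
  shows "Viol 1 Cu V Vb X Y (k, m, S, t) \<le> best_viol (k, m, t)"
proof -
  have "(\<Sum>s\<in>S. weight k s * (Y (t - s) - Y (t - s - 1)))
      \<le> (\<Sum>s\<in>S. weight k s * max 0 (Y (t - s) - Y (t - s - 1)))"
  proof (rule sum_mono)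
    fix s assume "s \<in> S"
    then have "0 < weight k s" using S weight_pos by force
    then show "weight k s * (Y (t - s) - Y (t - s - 1)) \<le> weight k s * max 0 (Y (t - s) - Y (t - s - 1))"
      by (intro mult_left_mono) auto
  qed
  also have "\<dots> \<le> gain k t (min (k - 1) (int L - m - 2))"
    unfolding gain_def
  proof (rule sum_mono2)
    fix s assume "s \<in> {0..min (k - 1) (int L - m - 2)} - S"
    then have "0 < weight k s" using weight_pos by force
    then show "0 \<le> weight k s * max 0 (Y (t - s) - Y (t - s - 1))" by simp
  qed (use S in auto)
  finally show ?thesis unfolding Viol_1_eq best_viol_def by simp
qed

lemma Viol_1_best_S: "Viol 1 Cu V Vb X Y (k, m, best_S k m t, t) = best_viol (k, m, t)"
proof -
  have "(\<Sum>s\<in>best_S k m t. weight k s * (Y (t - s) - Y (t - s - 1)))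
      = gain k t (min (k - 1) (int L - m - 2))"
    unfolding best_S_def gain_def
    by (subst sum.inter_filter) (auto intro!: sum.cong simp: max_def)
  then show ?thesis unfolding Viol_1_eq best_viol_def by simp
qed

lemma violated_1_best_viol_pos:
  assumes "violated 1 T L Cb Cu V Vb X Y"
  shows "\<exists>p\<in>triples. 0 < best_viol p"
proof -
  obtain k m S t where "(k, m, S, t) \<in> Fam 1 T L Cb Cu V" and pos: "Viol 1 Cu V Vb X Y (k, m, S, t) > 0"
    using assms unfolding violated_def by auto
  then have "(k, m, t) \<in> triples" and "Viol 1 Cu V Vb X Y (k, m, S, t) \<le> best_viol (k, m, t)"
    using Viol_1_le_best_viol unfolding Fam_1_eq by auto
  with pos show ?thesis by force
qed

lemma most_violated_1_best_S:
  assumes "(k, m, t) \<in> triples" and max: "\<forall>p\<in>triples. best_viol p \<le> best_viol (k, m, t)"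
  shows "most_violated 1 T L Cb Cu V Vb X Y (k, m, best_S k m t, t)"
  unfolding most_violated_def
proof
  show "(k, m, best_S k m t, t) \<in> Fam 1 T L Cb Cu V"
    using assms(1) unfolding Fam_1_eq best_S_def by auto
next
  show "\<forall>i\<in>Fam 1 T L Cb Cu V. Viol 1 Cu V Vb X Y i \<le> Viol 1 Cu V Vb X Y (k, m, best_S k m t, t)"
  proof
    fix i assume "i \<in> Fam 1 T L Cb Cu V"
    then obtain k' m' S' t' where i: "i = (k', m', S', t')" "(k', m', t') \<in> triples"
      "S' \<subseteq> {0..min (k' - 1) (int L - m' - 2)}"
      unfolding Fam_1_eq by auto
    then have "Viol 1 Cu V Vb X Y i \<le> best_viol (k', m', t')"
      using Viol_1_le_best_viol by simp
    also have "\<dots> \<le> best_viol (k, m, t)" using max i(2) by blast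
    finally show "Viol 1 Cu V Vb X Y i \<le> Viol 1 Cu V Vb X Y (k, m, best_S k m t, t)"
      unfolding Viol_1_best_S .
  qed
qed

end

section \<open>Time reversal\<close>

definition reverse_index :: "nat \<Rightarrow> int \<times> int \<times> int set \<times> int \<Rightarrow> int \<times> int \<times> int set \<times> int" where
  "reverse_index T = (\<lambda>(k, m, S, t). (k, m, S, int T + 1 - t))"

lemma reverse_index_reverse_index [simp]: "reverse_index T (reverse_index T i) = i"
  unfolding reverse_index_def by (cases i) auto

lemma inj_reverse_index: "inj (reverse_index T)"
  by (rule injI) (metis reverse_index_reverse_index)

lemma Fam_2_iff_Fam_1: "i \<in> Fam 2 T L Cb Cu V \<longleftrightarrow> reverse_index T i \<in> Fam 1 T L Cb Cu V"
  unfolding Fam_def reverse_index_def by (cases i) auto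

lemma Viol_2_eq_Viol_1:
  "Viol 2 Cu V Vb x y i =
   Viol 1 Cu V Vb (\<lambda>u. x (int T + 1 - u)) (\<lambda>u. y (int T + 1 - u)) (reverse_index T i)"
proof -
  obtain k m S t where i: "i = (k, m, S, t)" by (cases i) auto
  have reflect: "\<And>a. int T + 1 - (int T + 1 - t + a) = t - a" "\<And>a. int T + 1 - (int T + 1 - t - a) = t + a"
    "int T + 1 - (int T + 1 - t) = t" "\<And>a. int T + 1 - (int T + 1 - t - a - 1) = t + a + 1"
    "int T + 1 - (int T + 1 - t + m + 1) = t - m - 1"
    by simp_all
  have "((2::nat) = 1) = False" by simp
  then show ?thesis
    unfolding Viol_def reverse_index_def i by (simp only: prod.case if_True if_False reflect simp_thms)
qed

lemma Fam_1_eq_reverse_Fam_2: "Fam 1 T L Cb Cu V = reverse_index T ` Fam 2 T L Cb Cu V"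
proof (intro equalityI subsetI)
  fix i assume "i \<in> Fam 1 T L Cb Cu V"
  then show "i \<in> reverse_index T ` Fam 2 T L Cb Cu V"
    by (intro image_eqI[of _ _ "reverse_index T i"]) (simp_all add: Fam_2_iff_Fam_1)
qed (auto simp: Fam_2_iff_Fam_1)

lemma violated_2_iff_violated_1:
  "violated 2 T L Cb Cu V Vb x y \<longleftrightarrow>
   violated 1 T L Cb Cu V Vb (\<lambda>u. x (int T + 1 - u)) (\<lambda>u. y (int T + 1 - u))"
  unfolding violated_def Fam_1_eq_reverse_Fam_2 Viol_2_eq_Viol_1[where T = T] by simp

lemma most_violated_2_iff_most_violated_1:
  "most_violated 2 T L Cb Cu V Vb x y i \<longleftrightarrow>
   most_violated 1 T L Cb Cu V Vb (\<lambda>u. x (int T + 1 - u)) (\<lambda>u. y (int T + 1 - u)) (reverse_index T i)"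
  unfolding most_violated_def Fam_1_eq_reverse_Fam_2 Viol_2_eq_Viol_1[where T = T]
  by (simp add: inj_image_mem_iff[OF inj_reverse_index])

fun instrs :: "instr list \<Rightarrow> prog" where
  "instrs [] = Skip"
| "instrs (i # ins) = Seq (Instr i) (instrs ins)"

text \<open>Integer registers: 0, 1, 2 the best k, m, t found so far; 3 T; 4 L;
  5, 6 the addresses of x 0 and y 0; 7 the address stride (x u lives at ir 5 + ir 7 * u);
  8 k; 9 t; 10 m; 11 s; 12 a loop bound; 13 an index; 14--17 scratch; 18 the constant 1;
  20 the constant 0.  Real registers: 0--3 Cb, Cu, V, Vb; 4 the best violation so far;
  5 the constant 0; 6 the running sum of y (t + i), 1 \<le> i \<le> m; 7--15 scratch.
  Real memory cell -M-2 holds the prefix sum of the gains up to M (cell -1 holds the empty sum),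
  and the integer memory holds the indicator of the output set S.\<close>

definition gain_body :: prog where
  "gain_body = Seq (instrs [ISub 14 9 11, IMul 15 7 14, IAdd 15 6 15, RLoad 8 15,
      IConst 16 1, ISub 14 14 16, IMul 15 7 14, IAdd 15 6 15, RLoad 9 15,
      RSub 8 8 9,
      ISub 14 8 11, OfInt 10 14, RMul 10 10 2, RAdd 10 10 1, RSub 10 10 3,
      IConst 16 (-1), ISub 17 16 11, RLoad 11 17])
   (Seq (If (RLess 5 8) (instrs [RMul 12 10 8, RAdd 11 11 12]) Skip)
     (instrs [IConst 16 1, ISub 17 17 16, RStore 17 11, IAdd 11 11 16]))"

definition gain_init :: prog where "gain_init = instrs [IConst 14 (-1), RStore 14 5, IConst 11 0]"
definition gain_loop :: prog where "gain_loop = While (ILess 11 8) gain_body"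

definition s_bound :: prog where
  "s_bound = Seq (instrs [ISub 13 4 10, IConst 16 2, ISub 13 13 16, IConst 16 1, ISub 17 8 16])
     (Seq (If (ILess 17 13) (instrs [IAdd 13 17 20]) Skip)
      (Seq (instrs [IConst 16 (-1)]) (If (ILess 13 16) (instrs [IAdd 13 16 20]) Skip)))"

definition m_value :: prog where
  "m_value = instrs [IConst 16 (-2), ISub 17 16 13, RLoad 13 17,
     IMul 15 7 9, IAdd 15 5 15, RLoad 7 15,
     ISub 14 9 8, IMul 15 7 14, IAdd 15 5 15, RLoad 8 15,
     IAdd 14 9 10, IConst 16 1, IAdd 14 14 16, IMul 15 7 14, IAdd 15 6 15, RLoad 9 15,
     IMul 15 7 9, IAdd 15 6 15, RLoad 10 15,
     ISub 14 9 8, IMul 15 7 14, IAdd 15 6 15, RLoad 11 15,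
     ISub 14 8 10, OfInt 12 14, RMul 12 12 2, RAdd 12 12 1, RSub 12 12 3,
     RMul 12 12 9,
     RMul 14 2 6, RAdd 12 12 14,
     RMul 14 3 10, RAdd 12 12 14,
     RMul 14 1 11, RSub 12 12 14,
     RSub 15 7 8, RSub 15 15 12, RAdd 15 15 13]"

definition m_update :: prog where
  "m_update = Seq (If (RLess 4 15) (instrs [RAdd 4 15 5, IAdd 0 8 20, IAdd 1 10 20, IAdd 2 9 20]) Skip)
     (instrs [RAdd 6 6 9, IConst 16 1, IAdd 10 10 16])"

definition m_init :: prog where
  "m_init = Seq (instrs [IAdd 12 8 20, ISub 14 3 9])
     (Seq (If (ILess 14 12) (instrs [IAdd 12 14 20]) Skip) (instrs [IConst 10 0, RAdd 6 5 5]))"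
definition m_loop :: prog where "m_loop = While (ILess 10 12) (Seq s_bound (Seq m_value m_update))"

definition t_next :: prog where "t_next = instrs [IConst 16 1, IAdd 9 9 16]"
definition t_body :: prog where "t_body = Seq gain_init (Seq gain_loop (Seq m_init (Seq m_loop t_next)))"
definition t_start :: prog where "t_start = instrs [IConst 14 1, IAdd 9 8 14]"
definition t_loop :: prog where "t_loop = Seq t_start (While (ILess 9 3) t_body)"

definition k_test :: prog where "k_test = instrs [OfInt 7 8, RMul 7 7 2, RAdd 7 7 1]"
definition k_next :: prog where "k_next = instrs [IConst 14 1, IAdd 8 8 14]"
definition k_loop :: prog where
  "k_loop = While (ILess 8 3) (Seq k_test (Seq (If (RLess 7 0) t_loop Skip) k_next))"

definition support_init :: prog where
  "support_init = Seq (instrs [IConst 16 1, ISub 12 0 16, ISub 13 4 1, IConst 16 2, ISub 13 13 16])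
     (Seq (If (ILess 13 12) (instrs [IAdd 12 13 20]) Skip)
       (instrs [IConst 16 1, IAdd 12 12 16, IConst 11 0, IConst 18 1]))"
definition support_body :: prog where
  "support_body = Seq (instrs [ISub 14 2 11, IMul 15 7 14, IAdd 15 6 15, RLoad 8 15,
       IConst 16 1, ISub 14 14 16, IMul 15 7 14, IAdd 15 6 15, RLoad 9 15])
     (Seq (If (RLess 9 8) (instrs [IStore 11 18]) Skip) (instrs [IConst 16 1, IAdd 11 11 16]))"
definition support_loop :: prog where "support_loop = While (ILess 11 12) support_body"

definition search :: prog where
  "search = Seq (instrs [IConst 8 1]) (Seq k_loop (Seq support_init support_loop))"

definition load_input :: "nat \<Rightarrow> prog" where
  "load_input j = (if j = 1 then
     instrs [IAdd 3 0 20, IAdd 4 1 20, IConst 0 0, IConst 1 0, IConst 5 0, IAdd 6 3 20, IConst 7 1]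
   else instrs [IAdd 3 0 20, IAdd 4 1 20, IConst 0 0, IConst 1 0, IConst 14 1, IAdd 5 3 14,
      IAdd 6 3 3, IAdd 6 6 14, IConst 7 (-1)])"

definition store_output :: prog where "store_output = instrs [IMul 14 7 2, IAdd 2 5 14]"

definition separation_prog :: "nat \<Rightarrow> prog" where
  "separation_prog j = Seq (load_input j) (Seq search store_output)"

lemmas straight_line_defs = gain_body_def gain_init_def s_bound_def m_value_def m_update_def m_init_def
  t_next_def t_start_def k_test_def k_next_def support_init_def support_body_def store_output_def

lemma loop_free_progs:
  "loop_free gain_body" "loop_free gain_init" "loop_free s_bound" "loop_free m_value" "loop_free m_update"
  "loop_free m_init" "loop_free t_next" "loop_free t_start" "loop_free k_test" "loop_free k_next"
  "loop_free support_init" "loop_free support_body" "loop_free store_output" "loop_free (load_input j)"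
  by (simp_all add: straight_line_defs load_input_def)

lemma cost_progs:
  "cost_loop_free gain_body \<le> 30" "cost_loop_free gain_init \<le> 3" "cost_loop_free s_bound \<le> 10" "cost_loop_free m_value \<le> 40"
  "cost_loop_free m_update \<le> 10" "cost_loop_free m_init \<le> 10" "cost_loop_free t_next \<le> 2" "cost_loop_free t_start \<le> 2"
  "cost_loop_free k_test \<le> 3" "cost_loop_free k_next \<le> 2"
  "cost_loop_free support_init \<le> 20" "cost_loop_free support_body \<le> 20"
  "cost_loop_free store_output \<le> 2" "cost_loop_free (load_input j) \<le> 10"
  by (simp_all add: straight_line_defs load_input_def)

text \<open>\<open>M0\<close> is the input part of the real memory: the program writes only to negative addresses.\<close>

locale machine = separation_data +
  fixes base_x base_y stride :: int and M0 :: "int \<Rightarrow> real"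
  assumes layout: "\<And>u. 1 \<le> u \<Longrightarrow> u \<le> int T \<Longrightarrow>
       M0 (base_x + stride * u) = X u \<and> M0 (base_y + stride * u) = Y u
       \<and> 0 < base_x + stride * u \<and> 0 < base_y + stride * u"
begin

definition env :: "state \<Rightarrow> bool" where
  "env s \<longleftrightarrow> ir s 3 = int T \<and> ir s 4 = int L \<and> ir s 5 = base_x \<and> ir s 6 = base_y \<and> ir s 7 = stride
     \<and> ir s 20 = 0 \<and> rr s 0 = Cb \<and> rr s 1 = Cu \<and> rr s 2 = V \<and> rr s 3 = Vb \<and> rr s 5 = 0
     \<and> (\<forall>a>0. rm s a = M0 a)"

lemma env_regs:
  assumes "env s"
  shows "ir s 3 = int T" "ir s 4 = int L" "ir s 5 = base_x" "ir s 6 = base_y" "ir s 7 = stride"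
    "ir s 20 = 0" "rr s 0 = Cb" "rr s 1 = Cu" "rr s 2 = V" "rr s 3 = Vb" "rr s 5 = 0"
  using assms unfolding env_def by auto

lemma env_X: "env s \<Longrightarrow> 1 \<le> u \<Longrightarrow> u \<le> int T \<Longrightarrow> rm s (base_x + stride * u) = X u"
  unfolding env_def using layout by auto

lemma env_Y: "env s \<Longrightarrow> 1 \<le> u \<Longrightarrow> u \<le> int T \<Longrightarrow> rm s (base_y + stride * u) = Y u"
  unfolding env_def using layout by auto

text \<open>The all-zero state encodes that nothing positive has been found yet.\<close>

definition best_so_far :: "(int \<times> int \<times> int) set \<Rightarrow> state \<Rightarrow> bool" where
  "best_so_far A s \<longleftrightarrow> 0 \<le> rr s 4 \<and> (\<forall>p\<in>A. best_viol p \<le> rr s 4) \<and>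
     (((ir s 0, ir s 1, ir s 2) = (0, 0, 0) \<and> rr s 4 = 0) \<or>
      ((ir s 0, ir s 1, ir s 2) \<in> A \<and> best_viol (ir s 0, ir s 1, ir s 2) = rr s 4))"

lemma best_so_far_cong:
  "rr s' 4 = rr s 4 \<Longrightarrow> ir s' 0 = ir s 0 \<Longrightarrow> ir s' 1 = ir s 1 \<Longrightarrow> ir s' 2 = ir s 2
   \<Longrightarrow> best_so_far A s' = best_so_far A s"
  unfolding best_so_far_def by simp

lemma best_so_far_insert:
  assumes "best_so_far A s"
    and "(rr s 4 < best_viol p \<and> rr s' 4 = best_viol p \<and> (ir s' 0, ir s' 1, ir s' 2) = p) \<or>
         (\<not> rr s 4 < best_viol p \<and> rr s' 4 = rr s 4 \<and> ir s' 0 = ir s 0 \<and> ir s' 1 = ir s 1 \<and> ir s' 2 = ir s 2)"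
  shows "best_so_far (insert p A) s'"
  using assms unfolding best_so_far_def by (auto 0 3)

definition kt_range :: "int \<Rightarrow> int \<Rightarrow> bool" where
  "kt_range k t \<longleftrightarrow> 1 \<le> k \<and> k \<le> int T - 1 \<and> Cb - Cu - of_int k * V > 0 \<and> k + 1 \<le> t \<and> t \<le> int T - 1"

definition scanned :: "int \<Rightarrow> int \<Rightarrow> int \<Rightarrow> (int \<times> int \<times> int) set" where
  "scanned k t m = {(k', m', t') \<in> triples. k' < k \<or> (k' = k \<and> (t' < t \<or> (t' = t \<and> m' < m)))}"

lemma scanned_first: "scanned 1 0 0 = {}"
  unfolding scanned_def triples_def by auto

lemma scanned_last: "scanned (int T) 0 0 = triples"
  unfolding scanned_def triples_def by auto

lemma scanned_insert: "(k, m, t) \<in> triples \<Longrightarrow> scanned k t (m + 1) = insert (k, m, t) (scanned k t m)"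
  unfolding scanned_def by auto

lemma scanned_t_first: "scanned k (k + 1) 0 = scanned k 0 0"
  unfolding scanned_def triples_def by auto

lemma scanned_t_next: "kt_range k t \<Longrightarrow> scanned k t (min k (int T - t)) = scanned k (t + 1) 0"
  unfolding scanned_def triples_def kt_range_def by auto

lemma scanned_t_last: "scanned k (int T) 0 = scanned (k + 1) 0 0"
  unfolding scanned_def triples_def by auto

lemma scanned_k_skip: "\<not> Cb - Cu - of_int k * V > 0 \<Longrightarrow> scanned k 0 0 = scanned (k + 1) 0 0"
  unfolding scanned_def triples_def by auto

definition gain_inv :: "int \<Rightarrow> int \<Rightarrow> state \<Rightarrow> bool" where
  "gain_inv k t s \<longleftrightarrow> env s \<and> im s = (\<lambda>_. 0) \<and> ir s 8 = k \<and> ir s 9 = t \<and> kt_range k t \<and>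
     0 \<le> ir s 11 \<and> ir s 11 \<le> k \<and> (\<forall>M\<in>{-1..ir s 11 - 1}. rm s (- M - 2) = gain k t M)
     \<and> best_so_far (scanned k t 0) s"

lemma gain_body_runs:
  assumes inv: "gain_inv k t s" and lt: "ir s 11 < ir s 8"
  shows "runs gain_body s 30 (\<lambda>s'. gain_inv k t s' \<and> nat (k - ir s' 11) < nat (k - ir s 11))"
proof -
  define s' where "s' = run_loop_free gain_body s"
  define i where "i = ir s 11"
  have e: "env s" and kt: "kt_range k t" and r: "ir s 8 = k" "ir s 9 = t" and i0: "0 \<le> i"
    and table: "\<forall>M\<in>{-1..i - 1}. rm s (- M - 2) = gain k t M"
    and b: "best_so_far (scanned k t 0) s" and imz: "im s = (\<lambda>_. 0)"
    using inv unfolding gain_inv_def i_def by auto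
  have ri: "ir s 11 = i" unfolding i_def ..
  have ik: "i < k" using lt r ri by simp
  note ev = env_regs[OF e]
  have y: "rm s (base_y + stride * (t - i)) = Y (t - i)"
    "rm s (base_y + stride * (t - i - 1)) = Y (t - i - 1)"
    using env_Y[OF e] ik i0 kt unfolding kt_range_def by auto
  have prev: "rm s (- 1 - i) = gain k t (i - 1)"
    using table i0 by (auto dest: bspec[of _ _ "i - 1"])
  have regs: "ir s' 11 = i + 1" "ir s' 8 = k" "ir s' 9 = t" "im s' = im s"
    "ir s' 0 = ir s 0" "ir s' 1 = ir s 1" "ir s' 2 = ir s 2" "rr s' 4 = rr s 4"
    "ir s' 3 = int T" "ir s' 4 = int L" "ir s' 5 = base_x" "ir s' 6 = base_y" "ir s' 7 = stride"
    "ir s' 20 = 0" "rr s' 0 = Cb" "rr s' 1 = Cu" "rr s' 2 = V" "rr s' 3 = Vb" "rr s' 5 = 0"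
    unfolding s'_def using ev r ri by (simp_all add: gain_body_def)
  have "rm s' = (rm s)(-2 - i := (if Y (t - i - 1) < Y (t - i)
      then gain k t (i - 1) + (of_int (k - i) * V + Cu - Vb) * (Y (t - i) - Y (t - i - 1))
      else gain k t (i - 1)))"
    unfolding s'_def using ev r y prev ri by (simp add: gain_body_def)
  then have mem: "rm s' = (rm s)(-2 - i := gain k t i)"
    using gain_step[OF i0, of k t] unfolding weight_def by (simp add: algebra_simps)
  have "env s'" using e regs mem i0 unfolding env_def by auto
  moreover have "\<forall>M\<in>{-1..ir s' 11 - 1}. rm s' (- M - 2) = gain k t M"
    using table regs(1) mem by auto
  moreover have "best_so_far (scanned k t 0) s'" using b best_so_far_cong[of s' s] regs by simp
  ultimately have "gain_inv k t s'" unfolding gain_inv_def using regs kt imz ik i0 by auto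
  moreover have "nat (k - ir s' 11) < nat (k - ir s 11)" using regs ik i_def by simp
  ultimately show ?thesis unfolding s'_def
    by (intro runs_loop_free) (use loop_free_progs cost_progs in auto)
qed

lemma gain_loop_runs:
  "gain_inv k t s \<Longrightarrow> runs gain_loop s (31 * (T + 1)) (\<lambda>s'. gain_inv k t s' \<and> ir s' 11 = k)"
  unfolding gain_loop_def
proof (rule runs_While[where f = "\<lambda>s. nat (k - ir s 11)" and N = T and b = 30])
  fix s assume "gain_inv k t s" "holds (ILess 11 8) s"
  then show "runs gain_body s 30 (\<lambda>s'. gain_inv k t s' \<and> nat (k - ir s' 11) < nat (k - ir s 11))"
    using gain_body_runs by simp
next
  assume "gain_inv k t s" then show "nat (k - ir s 11) \<le> T"
    unfolding gain_inv_def kt_range_def by auto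
next
  fix s assume "gain_inv k t s" "\<not> holds (ILess 11 8) s"
  then show "gain_inv k t s \<and> ir s 11 = k" unfolding gain_inv_def by auto
qed auto

definition m_inv :: "int \<Rightarrow> int \<Rightarrow> state \<Rightarrow> bool" where
  "m_inv k t s \<longleftrightarrow> env s \<and> im s = (\<lambda>_. 0) \<and> ir s 8 = k \<and> ir s 9 = t \<and> kt_range k t \<and>
     ir s 12 = min k (int T - t) \<and> 0 \<le> ir s 10 \<and> ir s 10 \<le> ir s 12 \<and> rr s 6 = sum_ahead (ir s 10) t \<and>
     (\<forall>M\<in>{-1..k - 1}. rm s (- M - 2) = gain k t M) \<and> best_so_far (scanned k t (ir s 10)) s"

lemma s_bound_run:
  assumes "ir s 20 = 0"
  defines "s' \<equiv> run_loop_free s_bound s"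
  shows "ir s' 13 = max (-1) (min (ir s 8 - 1) (ir s 4 - ir s 10 - 2))"
    "\<And>r. r \<notin> {13, 16, 17} \<Longrightarrow> ir s' r = ir s r" "rr s' = rr s" "rm s' = rm s" "im s' = im s"
  using assms by (auto simp: s_bound_def)

lemma m_inv_memory:
  assumes inv: "m_inv k t s" and lt: "ir s 10 < ir s 12"
  defines "m \<equiv> ir s 10"
  shows "rm s (base_x + stride * t) = X t" "rm s (base_x + stride * (t - k)) = X (t - k)"
    "rm s (base_y + stride * (t + m + 1)) = Y (t + m + 1)" "rm s (base_y + stride * t) = Y t"
    "rm s (base_y + stride * (t - k)) = Y (t - k)"
    "rm s (- 2 - max (-1) (min (k - 1) (int L - m - 2))) = gain k t (min (k - 1) (int L - m - 2))"
proof -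
  have e: "env s" and kt: "kt_range k t" and m0: "0 \<le> m" and r12: "ir s 12 = min k (int T - t)"
    and table: "\<forall>M\<in>{-1..k - 1}. rm s (- M - 2) = gain k t M"
    using inv unfolding m_inv_def m_def by auto
  have "m < k" "m < int T - t" using lt r12 m_def by auto
  then have "1 \<le> t - k" "t - k \<le> int T" "1 \<le> t" "t \<le> int T" "1 \<le> t + m + 1" "t + m + 1 \<le> int T"
    using kt m0 unfolding kt_range_def by auto
  then show "rm s (base_x + stride * t) = X t" "rm s (base_x + stride * (t - k)) = X (t - k)"
    "rm s (base_y + stride * (t + m + 1)) = Y (t + m + 1)" "rm s (base_y + stride * t) = Y t"
    "rm s (base_y + stride * (t - k)) = Y (t - k)"
    using env_X[OF e] env_Y[OF e] by auto
  define M where "M = max (-1) (min (k - 1) (int L - m - 2))"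
  have "M \<in> {-1..k - 1}" using kt unfolding M_def kt_range_def by auto
  then have "rm s (- M - 2) = gain k t M" using table by blast
  moreover have "- 2 - M = - M - 2" by simp
  ultimately have "rm s (- 2 - M) = gain k t M" by metis
  then show "rm s (- 2 - max (-1) (min (k - 1) (int L - m - 2))) = gain k t (min (k - 1) (int L - m - 2))"
    unfolding M_def gain_max_neg1 .
qed

lemma m_value_run:
  assumes inv: "m_inv k t s" and lt: "ir s 10 < ir s 12"
  defines "s' \<equiv> run_loop_free m_value (run_loop_free s_bound s)"
  shows "rr s' 15 = best_viol (k, ir s 10, t)" "rr s' 9 = Y (t + ir s 10 + 1)"
    "rm s' = rm s" "im s' = im s" "\<And>r. r \<notin> {13, 14, 15, 16, 17} \<Longrightarrow> ir s' r = ir s r"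
    "\<And>r. r < 7 \<Longrightarrow> rr s' r = rr s r"
proof -
  define m where "m = ir s 10"
  define s1 where "s1 = run_loop_free s_bound s"
  have e: "env s" and r: "ir s 8 = k" "ir s 9 = t" "ir s 10 = m" and r6: "rr s 6 = sum_ahead m t"
    using inv unfolding m_inv_def m_def by auto
  note ev = env_regs[OF e]
  note mem = m_inv_memory[OF inv lt, folded m_def]
  note s1 = s_bound_run[OF ev(6), folded s1_def]
  have s1_regs: "ir s1 13 = max (-1) (min (k - 1) (int L - m - 2))" "ir s1 8 = k" "ir s1 9 = t"
    "ir s1 10 = m" "ir s1 5 = base_x" "ir s1 6 = base_y" "ir s1 7 = stride"
    "rr s1 = rr s" "rm s1 = rm s" "im s1 = im s"
    using s1 r ev by auto
  show "rm s' = rm s" "im s' = im s" "\<And>r. r < 7 \<Longrightarrow> rr s' r = rr s r"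
    unfolding s'_def s1_def[symmetric] using s1_regs by (simp_all add: m_value_def)
  show "\<And>r. r \<notin> {13, 14, 15, 16, 17} \<Longrightarrow> ir s' r = ir s r"
    unfolding s'_def s1_def[symmetric] using s1(2) by (simp add: m_value_def)
  show "rr s' 9 = Y (t + ir s 10 + 1)"
    unfolding s'_def s1_def[symmetric] using s1_regs mem(3) r by (simp add: m_value_def)
  have "rr s' 15 = X t - X (t - k) - ((real_of_int (k - m) * V + Cu - Vb) * Y (t + m + 1)
      + V * sum_ahead m t + Vb * Y t - Cu * Y (t - k)) + gain k t (min (k - 1) (int L - m - 2))"
    unfolding s'_def s1_def[symmetric] using s1_regs ev mem r6 by (simp add: m_value_def)
  then show "rr s' 15 = best_viol (k, ir s 10, t)"
    unfolding best_viol_def m_def by (simp add: algebra_simps)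
qed

lemma m_update_run:
  assumes "rr s 5 = 0" "ir s 20 = 0"
  defines "s' \<equiv> run_loop_free m_update s"
  shows "rm s' = rm s" "im s' = im s" "ir s' 10 = ir s 10 + 1" "rr s' 6 = rr s 6 + rr s 9"
    "\<And>r. r \<notin> {0, 1, 2, 10, 16} \<Longrightarrow> ir s' r = ir s r" "\<And>r. r \<notin> {4, 6} \<Longrightarrow> rr s' r = rr s r"
    "rr s 4 < rr s 15 \<Longrightarrow> rr s' 4 = rr s 15 \<and> (ir s' 0, ir s' 1, ir s' 2) = (ir s 8, ir s 10, ir s 9)"
    "\<not> rr s 4 < rr s 15 \<Longrightarrow> rr s' 4 = rr s 4 \<and> ir s' 0 = ir s 0 \<and> ir s' 1 = ir s 1 \<and> ir s' 2 = ir s 2"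
  using assms by (simp_all add: m_update_def)

lemma m_body_runs:
  assumes inv: "m_inv k t s" and lt: "ir s 10 < ir s 12"
  shows "runs (Seq s_bound (Seq m_value m_update)) s 60
    (\<lambda>s'. m_inv k t s' \<and> nat (ir s' 12 - ir s' 10) < nat (ir s 12 - ir s 10))"
proof -
  define m where "m = ir s 10"
  define s2 where "s2 = run_loop_free m_value (run_loop_free s_bound s)"
  define s3 where "s3 = run_loop_free m_update s2"
  have e: "env s" and kt: "kt_range k t" and r: "ir s 8 = k" "ir s 9 = t" "ir s 10 = m" and m0: "0 \<le> m"
    and b: "best_so_far (scanned k t m) s" and r12: "ir s 12 = min k (int T - t)"
    and r6: "rr s 6 = sum_ahead m t"
    using inv unfolding m_inv_def m_def by auto
  note ev = env_regs[OF e]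
  note s2 = m_value_run[OF inv lt, folded s2_def m_def]
  have s2_regs: "rr s2 5 = 0" "ir s2 20 = 0" "ir s2 8 = k" "ir s2 9 = t" "ir s2 10 = m"
    "rr s2 4 = rr s 4" "ir s2 0 = ir s 0" "ir s2 1 = ir s 1" "ir s2 2 = ir s 2"
    using s2(5,6) ev r by auto
  note s3 = m_update_run[OF s2_regs(1,2), folded s3_def]
  have "(k, m, t) \<in> triples" using kt lt r12 m0 r unfolding kt_range_def triples_def by auto
  have "best_so_far (insert (k, m, t) (scanned k t m)) s3"
  proof (rule best_so_far_insert)
    show "best_so_far (scanned k t m) s2" using b best_so_far_cong[of s2 s] s2_regs by simp
    show "(rr s2 4 < best_viol (k, m, t) \<and> rr s3 4 = best_viol (k, m, t) \<and> (ir s3 0, ir s3 1, ir s3 2) = (k, m, t))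
      \<or> (\<not> rr s2 4 < best_viol (k, m, t) \<and> rr s3 4 = rr s2 4
         \<and> ir s3 0 = ir s2 0 \<and> ir s3 1 = ir s2 1 \<and> ir s3 2 = ir s2 2)"
      using s3(7,8) s2(1) s2_regs by (cases "rr s2 4 < rr s2 15") auto
  qed
  then have "best_so_far (scanned k t (m + 1)) s3"
    using scanned_insert[OF \<open>(k, m, t) \<in> triples\<close>] by simp
  moreover have regs: "rm s3 = rm s" "im s3 = im s" "ir s3 10 = m + 1"
    "rr s3 6 = sum_ahead (m + 1) t" "ir s3 8 = k" "ir s3 9 = t" "ir s3 12 = ir s 12"
    using s2 s3 s2_regs r6 sum_ahead_step[OF m0, of t] by simp_all
  moreover have "env s3" using e s2 s3 unfolding env_def by simp
  ultimately have "m_inv k t s3"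
    using inv lt unfolding m_inv_def m_def by simp
  moreover have "nat (ir s3 12 - ir s3 10) < nat (ir s 12 - ir s 10)" using regs r lt by simp
  ultimately show ?thesis unfolding s3_def s2_def
    by (intro runs_loop_free) (use loop_free_progs cost_progs in auto)
qed

lemma m_loop_runs:
  "m_inv k t s \<Longrightarrow> runs m_loop s (61 * (T + 1)) (\<lambda>s'. m_inv k t s' \<and> ir s' 10 = ir s' 12)"
  unfolding m_loop_def
proof (rule runs_While[where f = "\<lambda>s. nat (ir s 12 - ir s 10)" and N = T and b = 60])
  fix s assume "m_inv k t s" "holds (ILess 10 12) s"
  then show "runs (Seq s_bound (Seq m_value m_update)) s 60
      (\<lambda>s'. m_inv k t s' \<and> nat (ir s' 12 - ir s' 10) < nat (ir s 12 - ir s 10))"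
    using m_body_runs by simp
next
  assume "m_inv k t s" then show "nat (ir s 12 - ir s 10) \<le> T"
    unfolding m_inv_def kt_range_def by auto
next
  fix s assume "m_inv k t s" "\<not> holds (ILess 10 12) s"
  then show "m_inv k t s \<and> ir s 10 = ir s 12" unfolding m_inv_def by auto
qed auto

definition t_inv :: "int \<Rightarrow> state \<Rightarrow> bool" where
  "t_inv k s \<longleftrightarrow> env s \<and> im s = (\<lambda>_. 0) \<and> ir s 8 = k \<and> 1 \<le> k \<and> k \<le> int T - 1 \<and>
     Cb - Cu - of_int k * V > 0 \<and> k + 1 \<le> ir s 9 \<and> ir s 9 \<le> int T \<and> best_so_far (scanned k (ir s 9) 0) s"

lemma gain_init_runs:
  assumes inv: "t_inv k s" and lt: "ir s 9 < ir s 3"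
  shows "runs gain_init s 3 (gain_inv k (ir s 9))"
proof (rule runs_loop_free)
  let ?s = "run_loop_free gain_init s"
  have e: "env s" and b: "best_so_far (scanned k (ir s 9) 0) s"
    using inv unfolding t_inv_def by auto
  note ev = env_regs[OF e]
  have s: "ir ?s 11 = 0" "rm ?s = (rm s)(-1 := 0)" "\<And>r. r \<noteq> 11 \<Longrightarrow> r \<noteq> 14 \<Longrightarrow> ir ?s r = ir s r"
    "rr ?s = rr s" "im ?s = im s"
    using ev by (auto simp: gain_init_def)
  have "env ?s" using e s unfolding env_def by auto
  moreover have "best_so_far (scanned k (ir s 9) 0) ?s" using b best_so_far_cong[of ?s s] s by simp
  ultimately show "gain_inv k (ir s 9) ?s"
    unfolding gain_inv_def using s inv lt ev gain_neg[of "-1" k "ir s 9"]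
    unfolding t_inv_def kt_range_def by auto
qed (use loop_free_progs cost_progs in auto)

lemma m_init_runs:
  assumes inv: "gain_inv k t s" and exit: "ir s 11 = k"
  shows "runs m_init s 10 (m_inv k t)"
proof (rule runs_loop_free)
  let ?s = "run_loop_free m_init s"
  have e: "env s" and b: "best_so_far (scanned k t 0) s"
    and table: "\<forall>M\<in>{-1..k - 1}. rm s (- M - 2) = gain k t M"
    and r: "ir s 8 = k" "ir s 9 = t" "im s = (\<lambda>_. 0)"
    using inv exit unfolding gain_inv_def by auto
  note ev = env_regs[OF e]
  have s: "ir ?s 10 = 0" "ir ?s 12 = min k (int T - t)" "rm ?s = rm s"
    "\<And>r. r \<noteq> 10 \<Longrightarrow> r \<noteq> 12 \<Longrightarrow> r \<noteq> 14 \<Longrightarrow> ir ?s r = ir s r"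
    "\<And>r. r \<noteq> 6 \<Longrightarrow> rr ?s r = rr s r" "rr ?s 6 = 0" "im ?s = im s"
    using ev r by (auto simp: m_init_def)
  have "env ?s" using e s unfolding env_def by auto
  moreover have "best_so_far (scanned k t 0) ?s" using b best_so_far_cong[of ?s s] s by simp
  ultimately show "m_inv k t ?s"
    unfolding m_inv_def using s inv r table unfolding gain_inv_def kt_range_def
    by (auto simp: sum_ahead_def)
qed (use loop_free_progs cost_progs in auto)

lemma t_next_runs:
  assumes inv: "m_inv k t s" and exit: "ir s 10 = ir s 12"
  shows "runs t_next s 2 (\<lambda>s'. t_inv k s' \<and> ir s' 9 = t + 1)"
proof (rule runs_loop_free)
  let ?s = "run_loop_free t_next s"
  have e: "env s" and kt: "kt_range k t" and b: "best_so_far (scanned k t (ir s 10)) s"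
    and r: "ir s 8 = k" "ir s 9 = t" "im s = (\<lambda>_. 0)" "ir s 10 = min k (int T - t)"
    using inv exit unfolding m_inv_def by auto
  have s: "ir ?s 9 = t + 1" "rm ?s = rm s" "\<And>r. r \<noteq> 9 \<Longrightarrow> r \<noteq> 16 \<Longrightarrow> ir ?s r = ir s r"
    "rr ?s = rr s" "im ?s = im s"
    using r by (auto simp: t_next_def)
  have "env ?s" using e s unfolding env_def by auto
  moreover have "best_so_far (scanned k (t + 1) 0) ?s"
    using b best_so_far_cong[of ?s s] s r scanned_t_next[OF kt] by simp
  ultimately show "t_inv k ?s \<and> ir ?s 9 = t + 1"
    unfolding t_inv_def using s kt r unfolding kt_range_def by auto
qed (use loop_free_progs cost_progs in auto)

abbreviation t_body_cost :: nat where
  "t_body_cost \<equiv> 3 + (31 * (T + 1) + (10 + (61 * (T + 1) + 2)))"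

lemma t_body_runs:
  assumes "t_inv k s" and "ir s 9 < ir s 3"
  shows "runs t_body s t_body_cost (\<lambda>s'. t_inv k s' \<and> ir s' 9 = ir s 9 + 1)"
proof -
  let ?t = "ir s 9"
  have "runs (Seq m_loop t_next) s' (61 * (T + 1) + 2) (\<lambda>s'. t_inv k s' \<and> ir s' 9 = ?t + 1)"
    if "m_inv k ?t s'" for s'
    by (rule runs_Seq[OF m_loop_runs[OF that]]) (auto intro: t_next_runs)
  then have "runs (Seq m_init (Seq m_loop t_next)) s' (10 + (61 * (T + 1) + 2))
      (\<lambda>s'. t_inv k s' \<and> ir s' 9 = ?t + 1)"
    if "gain_inv k ?t s' \<and> ir s' 11 = k" for s'
    using that by (intro runs_Seq[OF m_init_runs]) auto
  then have "runs (Seq gain_loop (Seq m_init (Seq m_loop t_next))) s' (31 * (T + 1) + (10 + (61 * (T + 1) + 2)))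
      (\<lambda>s'. t_inv k s' \<and> ir s' 9 = ?t + 1)"
    if "gain_inv k ?t s'" for s'
    by (rule runs_Seq[OF gain_loop_runs[OF that]])
  then show ?thesis unfolding t_body_def
    by (rule runs_Seq[OF gain_init_runs[OF assms]])
qed

definition k_state :: "int \<Rightarrow> int \<Rightarrow> state \<Rightarrow> bool" where
  "k_state k k' s \<longleftrightarrow> env s \<and> im s = (\<lambda>_. 0) \<and> ir s 8 = k \<and> best_so_far (scanned k' 0 0) s"

lemma t_start_runs:
  assumes "k_state k k s" and "1 \<le> k" "k \<le> int T - 1" and "Cb - Cu - of_int k * V > 0"
  shows "runs t_start s 2 (t_inv k)"
proof (rule runs_loop_free)
  let ?s = "run_loop_free t_start s"
  have e: "env s" and r8: "ir s 8 = k" and b: "best_so_far (scanned k 0 0) s"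
    using assms(1) unfolding k_state_def by auto
  have s: "ir ?s 9 = k + 1" "rm ?s = rm s" "\<And>r. r \<noteq> 9 \<Longrightarrow> r \<noteq> 14 \<Longrightarrow> ir ?s r = ir s r"
    "rr ?s = rr s" "im ?s = im s"
    using r8 by (auto simp: t_start_def)
  have "env ?s" using e s unfolding env_def by auto
  moreover have "best_so_far (scanned k (k + 1) 0) ?s"
    using b best_so_far_cong[of ?s s] s scanned_t_first by simp
  ultimately show "t_inv k ?s" using s assms unfolding k_state_def t_inv_def by auto
qed (use loop_free_progs cost_progs in auto)

lemma t_while_runs:
  assumes "t_inv k s"
  shows "runs (While (ILess 9 3) t_body) s ((T + 1) * (t_body_cost + 1)) (k_state k (k + 1))"
proof (rule runs_While[where f = "\<lambda>s. nat (int T - ir s 9)" and N = T and b = t_body_cost and I = "t_inv k"])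
  fix s assume s: "t_inv k s" "holds (ILess 9 3) s"
  then have T: "ir s 9 < int T" and lt: "ir s 9 < ir s 3" unfolding t_inv_def env_def by auto
  show "runs t_body s t_body_cost (\<lambda>s'. t_inv k s' \<and> nat (int T - ir s' 9) < nat (int T - ir s 9))"
  proof (rule runs_mono[OF t_body_runs[OF s(1) lt]])
    fix s' assume "t_inv k s' \<and> ir s' 9 = ir s 9 + 1"
    then show "t_inv k s' \<and> nat (int T - ir s' 9) < nat (int T - ir s 9)" using T by auto
  qed simp
next
  show "nat (int T - ir s 9) \<le> T" using assms unfolding t_inv_def by auto
next
  fix s assume "t_inv k s" "\<not> holds (ILess 9 3) s"
  then show "k_state k (k + 1) s"
    unfolding t_inv_def k_state_def env_def using scanned_t_last by auto
qed (use assms in auto)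

lemma t_loop_runs:
  assumes "k_state k k s" and "1 \<le> k" "k \<le> int T - 1" and "Cb - Cu - of_int k * V > 0"
  shows "runs t_loop s (2 + (T + 1) * (t_body_cost + 1)) (k_state k (k + 1))"
  unfolding t_loop_def using t_start_runs[OF assms] by (rule runs_Seq) (rule t_while_runs)

definition k_inv :: "state \<Rightarrow> bool" where
  "k_inv s \<longleftrightarrow> k_state (ir s 8) (ir s 8) s \<and> 1 \<le> ir s 8 \<and> ir s 8 \<le> int T"

lemma k_test_runs:
  assumes "k_state k k s"
  shows "runs k_test s 3 (\<lambda>s'. k_state k k s' \<and> rr s' 7 = of_int k * V + Cu)"
proof (rule runs_loop_free)
  let ?s = "run_loop_free k_test s"
  have e: "env s" and r8: "ir s 8 = k" and b: "best_so_far (scanned k 0 0) s"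
    using assms unfolding k_state_def by auto
  note ev = env_regs[OF e]
  have s: "rr ?s 7 = of_int k * V + Cu" "rm ?s = rm s" "ir ?s = ir s" "\<And>r. r \<noteq> 7 \<Longrightarrow> rr ?s r = rr s r"
    "im ?s = im s"
    using ev r8 by (auto simp: k_test_def)
  have "env ?s" using e s unfolding env_def by auto
  moreover have "best_so_far (scanned k 0 0) ?s" using b best_so_far_cong[of ?s s] s by simp
  ultimately show "k_state k k ?s \<and> rr ?s 7 = of_int k * V + Cu"
    using s assms unfolding k_state_def by simp
qed (use loop_free_progs cost_progs in auto)

lemma k_branch_runs:
  assumes s: "k_state k k s \<and> rr s 7 = of_int k * V + Cu" and k: "1 \<le> k" "k \<le> int T - 1"
  shows "runs (If (RLess 7 0) t_loop Skip) s (2 + (T + 1) * (t_body_cost + 1) + 1) (k_state k (k + 1))"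
proof (rule runs_If)
  assume "holds (RLess 7 0) s"
  then have "Cb - Cu - of_int k * V > 0" using s unfolding k_state_def env_def by auto
  then show "runs t_loop s (2 + (T + 1) * (t_body_cost + 1)) (k_state k (k + 1))"
    using t_loop_runs s k by blast
next
  assume "\<not> holds (RLess 7 0) s"
  then have "\<not> Cb - Cu - of_int k * V > 0" using s unfolding k_state_def env_def by auto
  then show "runs Skip s (2 + (T + 1) * (t_body_cost + 1)) (k_state k (k + 1))"
    using s scanned_k_skip by (intro runs_Skip) (auto simp: k_state_def)
qed

lemma k_next_runs:
  assumes "k_state k (k + 1) s" and k: "1 \<le> k" "k \<le> int T - 1"
  shows "runs k_next s 2 (\<lambda>s'. k_inv s' \<and> ir s' 8 = k + 1)"
proof (rule runs_loop_free)
  let ?s = "run_loop_free k_next s"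
  have e: "env s" and r8: "ir s 8 = k" and b: "best_so_far (scanned (k + 1) 0 0) s"
    using assms(1) unfolding k_state_def by auto
  have s: "ir ?s 8 = k + 1" "rm ?s = rm s" "\<And>r. r \<noteq> 8 \<Longrightarrow> r \<noteq> 14 \<Longrightarrow> ir ?s r = ir s r"
    "rr ?s = rr s" "im ?s = im s"
    using r8 by (auto simp: k_next_def)
  have "env ?s" using e s unfolding env_def by auto
  moreover have "best_so_far (scanned (k + 1) 0 0) ?s" using b best_so_far_cong[of ?s s] s by simp
  ultimately show "k_inv ?s \<and> ir ?s 8 = k + 1"
    using s assms k unfolding k_inv_def k_state_def by auto
qed (use loop_free_progs cost_progs in auto)

abbreviation k_body_cost :: nat where
  "k_body_cost \<equiv> 3 + ((2 + (T + 1) * (t_body_cost + 1) + 1) + 2)"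

lemma k_body_runs:
  assumes inv: "k_inv s" and lt: "ir s 8 < ir s 3"
  shows "runs (Seq k_test (Seq (If (RLess 7 0) t_loop Skip) k_next)) s k_body_cost
    (\<lambda>s'. k_inv s' \<and> ir s' 8 = ir s 8 + 1)"
proof -
  define k where "k = ir s 8"
  have start: "k_state k k s" and k: "1 \<le> k" "k \<le> int T - 1"
    using inv lt unfolding k_inv_def k_state_def env_def k_def by auto
  have "runs (Seq (If (RLess 7 0) t_loop Skip) k_next) s' ((2 + (T + 1) * (t_body_cost + 1) + 1) + 2)
      (\<lambda>s'. k_inv s' \<and> ir s' 8 = k + 1)"
    if "k_state k k s' \<and> rr s' 7 = of_int k * V + Cu" for s'
    using k_branch_runs[OF that k] k_next_runs[OF _ k] by (rule runs_Seq)
  with k_test_runs[OF start] show ?thesis unfolding k_def by (rule runs_Seq)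
qed

lemma k_loop_runs:
  assumes "k_inv s"
  shows "runs k_loop s ((T + 1) * (k_body_cost + 1)) (\<lambda>s'. env s' \<and> im s' = (\<lambda>_. 0) \<and> best_so_far triples s')"
  unfolding k_loop_def
proof (rule runs_While[where f = "\<lambda>s. nat (int T - ir s 8)" and N = T and b = k_body_cost and I = k_inv])
  fix s assume s: "k_inv s" "holds (ILess 8 3) s"
  then have lt: "ir s 8 < ir s 3" by simp
  show "runs (Seq k_test (Seq (If (RLess 7 0) t_loop Skip) k_next)) s k_body_cost
      (\<lambda>s'. k_inv s' \<and> nat (int T - ir s' 8) < nat (int T - ir s 8))"
  proof (rule runs_mono[OF k_body_runs[OF s(1) lt]])
    fix s' assume "k_inv s' \<and> ir s' 8 = ir s 8 + 1"
    then show "k_inv s' \<and> nat (int T - ir s' 8) < nat (int T - ir s 8)"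
      using s(1) lt unfolding k_inv_def k_state_def env_def by auto
  qed simp
next
  show "nat (int T - ir s 8) \<le> T" using assms unfolding k_inv_def by auto
next
  fix s assume "k_inv s" "\<not> holds (ILess 8 3) s"
  then show "env s \<and> im s = (\<lambda>_. 0) \<and> best_so_far triples s"
    unfolding k_inv_def k_state_def env_def using scanned_last by auto
qed (use assms in auto)

definition support_inv :: "(int \<Rightarrow> real) \<Rightarrow> state \<Rightarrow> bool" where
  "support_inv R s \<longleftrightarrow> env s \<and> best_so_far triples s \<and> ir s 12 = min (ir s 0 - 1) (int L - ir s 1 - 2) + 1
     \<and> ir s 18 = 1 \<and> 0 \<le> ir s 11 \<and> (ir s 11 \<le> ir s 12 \<or> ir s 11 = 0) \<and> rm s = R \<and>
     im s = (\<lambda>a. if 0 \<le> a \<and> a < ir s 11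
                   \<and> R (base_y + stride * (ir s 2 - a - 1)) < R (base_y + stride * (ir s 2 - a)) then 1 else 0)"

lemma support_init_runs:
  assumes e: "env s" and b: "best_so_far triples s" and imz: "im s = (\<lambda>_. 0)"
  shows "runs support_init s 20 (\<lambda>s'. support_inv (rm s) s' \<and> ir s' 11 = 0)"
proof (rule runs_loop_free)
  let ?s = "run_loop_free support_init s"
  note ev = env_regs[OF e]
  have s: "ir ?s 11 = 0" "ir ?s 18 = 1" "ir ?s 12 = min (ir s 0 - 1) (int L - ir s 1 - 2) + 1"
    "rm ?s = rm s" "im ?s = (\<lambda>_. 0)" "rr ?s = rr s"
    "\<And>r. r \<in> {0, 1, 2, 3, 4, 5, 6, 7, 20} \<Longrightarrow> ir ?s r = ir s r"
    using ev imz by (auto simp: support_init_def)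
  have "env ?s" using e s unfolding env_def by simp
  moreover have "best_so_far triples ?s" using b best_so_far_cong[of ?s s] s by simp
  ultimately show "support_inv (rm s) ?s \<and> ir ?s 11 = 0"
    unfolding support_inv_def using s by (auto simp: fun_eq_iff)
qed (use loop_free_progs cost_progs in auto)

lemma support_body_runs:
  assumes inv: "support_inv R s" and lt: "ir s 11 < ir s 12"
  shows "runs support_body s 20
    (\<lambda>s'. support_inv R s' \<and> nat (ir s' 12 - ir s' 11) < nat (ir s 12 - ir s 11))"
proof (rule runs_loop_free)
  let ?s = "run_loop_free support_body s"
  have e: "env s" and rmR: "rm s = R" and r18: "ir s 18 = 1"
    and imd: "im s = (\<lambda>a. if 0 \<le> a \<and> a < ir s 11
       \<and> R (base_y + stride * (ir s 2 - a - 1)) < R (base_y + stride * (ir s 2 - a)) then 1 else 0)"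
    using inv unfolding support_inv_def by auto
  note ev = env_regs[OF e]
  have s: "ir ?s 11 = ir s 11 + 1" "rm ?s = rm s" "\<And>r. r \<le> 5 \<Longrightarrow> rr ?s r = rr s r"
    "\<And>r. r \<in> {0, 1, 2, 3, 4, 5, 6, 7, 12, 18, 20} \<Longrightarrow> ir ?s r = ir s r"
    by (auto simp: support_body_def)
  have "im ?s = (\<lambda>a. if a = ir s 11
      \<and> R (base_y + stride * (ir s 2 - ir s 11 - 1)) < R (base_y + stride * (ir s 2 - ir s 11))
      then 1 else im s a)"
    using ev rmR r18 by (auto simp: support_body_def)
  then have "im ?s = (\<lambda>a. if 0 \<le> a \<and> a < ir ?s 11
      \<and> R (base_y + stride * (ir ?s 2 - a - 1)) < R (base_y + stride * (ir ?s 2 - a)) then 1 else 0)"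
    unfolding imd using s inv unfolding support_inv_def by (auto simp: fun_eq_iff)
  moreover have "env ?s" using e s unfolding env_def by simp
  moreover have "best_so_far triples ?s" using inv best_so_far_cong[of ?s s] s unfolding support_inv_def by simp
  ultimately show "support_inv R ?s \<and> nat (ir ?s 12 - ir ?s 11) < nat (ir s 12 - ir s 11)"
    using inv s lt rmR unfolding support_inv_def by auto
qed (use loop_free_progs cost_progs in auto)

lemma best_so_far_triples_bound: "best_so_far triples s \<Longrightarrow> ir s 0 \<le> int T"
  unfolding best_so_far_def triples_def by auto

lemma support_loop_runs:
  assumes "support_inv R s" and "ir s 11 = 0"
  shows "runs support_loop s (21 * (T + 1)) (\<lambda>s'. support_inv R s' \<and> \<not> ir s' 11 < ir s' 12)"
  unfolding support_loop_def
proof (rule runs_While[where f = "\<lambda>s. nat (ir s 12 - ir s 11)" and N = T and b = 20 and I = "support_inv R"])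
  fix s assume "support_inv R s" "holds (ILess 11 12) s"
  then show "runs support_body s 20
      (\<lambda>s'. support_inv R s' \<and> nat (ir s' 12 - ir s' 11) < nat (ir s 12 - ir s 11))"
    using support_body_runs by simp
next
  show "nat (ir s 12 - ir s 11) \<le> T"
    using assms best_so_far_triples_bound[of s] unfolding support_inv_def by auto
qed (use assms in auto)

lemma support_inv_exit:
  assumes inv: "support_inv R s" and exit: "\<not> ir s 11 < ir s 12" and pos: "\<exists>p\<in>triples. 0 < best_viol p"
  shows "(ir s 0, ir s 1, ir s 2) \<in> triples \<and> (\<forall>p\<in>triples. best_viol p \<le> best_viol (ir s 0, ir s 1, ir s 2))
    \<and> {a. im s a \<noteq> 0} = best_S (ir s 0) (ir s 1) (ir s 2)"
proof -
  define k where "k = ir s 0"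
  define m where "m = ir s 1"
  define t where "t = ir s 2"
  have e: "env s" and b: "best_so_far triples s" and rmR: "rm s = R"
    and r12: "ir s 12 = min (k - 1) (int L - m - 2) + 1" and r11: "0 \<le> ir s 11" "ir s 11 \<le> ir s 12 \<or> ir s 11 = 0"
    and imd: "im s = (\<lambda>a. if 0 \<le> a \<and> a < ir s 11
       \<and> R (base_y + stride * (t - a - 1)) < R (base_y + stride * (t - a)) then 1 else 0)"
    using inv unfolding support_inv_def k_def m_def t_def by auto
  have "0 < rr s 4" using b pos unfolding best_so_far_def by force
  then have kmt: "(k, m, t) \<in> triples" and best: "\<forall>p\<in>triples. best_viol p \<le> best_viol (k, m, t)"
    using b unfolding best_so_far_def k_def m_def t_def by auto
  have "a < ir s 11 \<longleftrightarrow> a \<le> min (k - 1) (int L - m - 2)" if "0 \<le> a" for a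
    using that r12 r11 exit by auto
  moreover have "R (base_y + stride * (t - a - 1)) = Y (t - a - 1) \<and> R (base_y + stride * (t - a)) = Y (t - a)"
    if "0 \<le> a" "a \<le> min (k - 1) (int L - m - 2)" for a
    using that env_Y[OF e] rmR kmt unfolding triples_def by auto
  ultimately have "{a. im s a \<noteq> 0} = best_S k m t"
    unfolding imd best_S_def by auto
  then show ?thesis using kmt best unfolding k_def m_def t_def by auto
qed

definition search_post :: "state \<Rightarrow> bool" where
  "search_post s \<longleftrightarrow> ir s 5 = base_x \<and> ir s 7 = stride \<and> ((\<exists>p\<in>triples. 0 < best_viol p) \<longrightarrow>
     (ir s 0, ir s 1, ir s 2) \<in> triples \<and> (\<forall>p\<in>triples. best_viol p \<le> best_viol (ir s 0, ir s 1, ir s 2))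
     \<and> {a. im s a \<noteq> 0} = best_S (ir s 0) (ir s 1) (ir s 2))"

abbreviation search_cost :: nat where
  "search_cost \<equiv> 1 + ((T + 1) * (k_body_cost + 1) + (20 + 21 * (T + 1)))"

lemma search_runs:
  assumes e: "env s" and imz: "im s = (\<lambda>_. 0)"
    and zero: "ir s 0 = 0" "ir s 1 = 0" "ir s 2 = 0" "rr s 4 = 0"
  shows "runs search s search_cost search_post"
  unfolding search_def
proof (rule runs_Seq)
  let ?s = "run_loop_free (instrs [IConst 8 1]) s"
  have s: "ir ?s 8 = 1" "rm ?s = rm s" "\<And>r. r \<noteq> 8 \<Longrightarrow> ir ?s r = ir s r" "rr ?s = rr s" "im ?s = im s"
    by auto
  have "env ?s" using e s unfolding env_def by simp
  moreover have "best_so_far (scanned 1 0 0) ?s" using s zero unfolding best_so_far_def scanned_first by simp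
  ultimately show "runs (instrs [IConst 8 1]) s 1 k_inv"
    using s imz T_pos by (intro runs_loop_free) (auto simp: k_inv_def k_state_def)
next
  fix s1 assume "k_inv s1"
  show "runs (Seq k_loop (Seq support_init support_loop)) s1
      ((T + 1) * (k_body_cost + 1) + (20 + 21 * (T + 1))) search_post"
  proof (rule runs_Seq[OF k_loop_runs[OF \<open>k_inv s1\<close>]])
    fix s2 assume s2: "env s2 \<and> im s2 = (\<lambda>_. 0) \<and> best_so_far triples s2"
    show "runs (Seq support_init support_loop) s2 (20 + 21 * (T + 1)) search_post"
    proof (rule runs_Seq[OF support_init_runs])
      fix s3 assume s3: "support_inv (rm s2) s3 \<and> ir s3 11 = 0"
      show "runs support_loop s3 (21 * (T + 1)) search_post"
      proof (rule runs_mono[OF support_loop_runs])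
        fix s4 assume s4: "support_inv (rm s2) s4 \<and> \<not> ir s4 11 < ir s4 12"
        then have "ir s4 5 = base_x" "ir s4 7 = stride" unfolding support_inv_def env_def by auto
        then show "search_post s4"
          using support_inv_exit[of "rm s2" s4] s4 unfolding search_post_def by blast
      qed (use s3 in auto)
    qed (use s2 in auto)
  qed
qed

lemma search_store_output_runs:
  assumes "env s" and "im s = (\<lambda>_. 0)" and "ir s 0 = 0" "ir s 1 = 0" "ir s 2 = 0" "rr s 4 = 0"
  shows "runs (Seq search store_output) s (search_cost + 2) (\<lambda>s'. \<exists>s1. search_post s1
    \<and> output_index s' = (ir s1 0, ir s1 1, {a. im s1 a \<noteq> 0}, base_x + stride * ir s1 2))"
proof (rule runs_Seq[OF search_runs[OF assms]])
  fix s1 assume post: "search_post s1"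
  show "runs store_output s1 2 (\<lambda>s'. \<exists>s1. search_post s1
    \<and> output_index s' = (ir s1 0, ir s1 1, {a. im s1 a \<noteq> 0}, base_x + stride * ir s1 2))"
  proof (rule runs_loop_free)
    have "ir s1 5 = base_x" "ir s1 7 = stride" using post unfolding search_post_def by auto
    then show "\<exists>s2. search_post s2 \<and> output_index (run_loop_free store_output s1)
        = (ir s2 0, ir s2 1, {a. im s2 a \<noteq> 0}, base_x + stride * ir s2 2)"
      using post by (intro exI[of _ s1]) (auto simp: store_output_def output_index_def)
  qed (use loop_free_progs cost_progs in auto)
qed

lemma search_cost_bound: "10 + (search_cost + 2) \<le> 2000 * T ^ 3"
proof -
  have "1 \<le> T" using T_pos by simp
  then have "T \<le> T * T" "T * T \<le> T * T * T" by simp_all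
  moreover have "10 + (search_cost + 2) = 92 * (T * T * T) + 292 * (T * T) + 338 * T + 171"
    by (simp add: algebra_simps)
  ultimately show ?thesis using \<open>1 \<le> T\<close> unfolding power3_eq_cube by linarith
qed

lemma search_post_most_violated:
  assumes "search_post s" and "violated 1 T L Cb Cu V Vb X Y"
  shows "most_violated 1 T L Cb Cu V Vb X Y (ir s 0, ir s 1, {a. im s a \<noteq> 0}, ir s 2)"
  using assms violated_1_best_viol_pos most_violated_1_best_S unfolding search_post_def by auto

end

lemma most_violated_reverse:
  fixes j T :: nat
  assumes j: "j \<in> {1, 2}"
  defines "r \<equiv> \<lambda>u. if j = 1 then u else int T + 1 - u"
  shows "violated j T L Cb Cu V Vb x y \<longleftrightarrow> violated 1 T L Cb Cu V Vb (x \<circ> r) (y \<circ> r)"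
    and "most_violated 1 T L Cb Cu V Vb (x \<circ> r) (y \<circ> r) (k, m, S, t)
      \<Longrightarrow> most_violated j T L Cb Cu V Vb x y (k, m, S, r t)"
proof -
  have "j = 1 \<or> j = 2" using j by simp
  then show "violated j T L Cb Cu V Vb x y \<longleftrightarrow> violated 1 T L Cb Cu V Vb (x \<circ> r) (y \<circ> r)"
    unfolding r_def by (auto simp: comp_def violated_2_iff_violated_1)
  assume "most_violated 1 T L Cb Cu V Vb (x \<circ> r) (y \<circ> r) (k, m, S, t)"
  with \<open>j = 1 \<or> j = 2\<close> show "most_violated j T L Cb Cu V Vb x y (k, m, S, r t)"
    unfolding r_def by (auto simp: comp_def most_violated_2_iff_most_violated_1 reverse_index_def)
qed

lemma separation_prog_correct:
  fixes x y :: "int \<Rightarrow> real"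
  assumes j: "j \<in> {1, 2}" and "0 < T" "0 < V" "Vb < Cu + V"
  shows "\<exists>n s'. exec (separation_prog j) (init_state T L Cb Cu V Vb x y) n s' \<and> n \<le> 2000 * T ^ 3
    \<and> (violated j T L Cb Cu V Vb x y \<longrightarrow> most_violated j T L Cb Cu V Vb x y (output_index s'))"
proof -
  define r where "r = (\<lambda>u. if j = 1 then u else int T + 1 - u)"
  define s0 where "s0 = init_state T L Cb Cu V Vb x y"
  define base_x where "base_x = (if j = 1 then 0 else int T + 1)"
  define base_y where "base_y = (if j = 1 then int T else 2 * int T + 1)"
  define stride :: int where "stride = (if j = 1 then 1 else -1)"
  have r_eq: "r u = base_x + stride * u" for u
    unfolding r_def base_x_def stride_def by simp
  interpret machine T L Cb Cu V Vb "x \<circ> r" "y \<circ> r" base_x base_y stride "rm s0"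
  proof
    fix u assume "1 \<le> u" "u \<le> int T"
    then show "rm s0 (base_x + stride * u) = (x \<circ> r) u \<and> rm s0 (base_y + stride * u) = (y \<circ> r) u
        \<and> 0 < base_x + stride * u \<and> 0 < base_y + stride * u"
      using j unfolding s0_def init_state_def base_x_def base_y_def stride_def r_def
      by (auto simp: algebra_simps)
  qed (use assms in auto)
  define s1 where "s1 = run_loop_free (load_input j) s0"
  have load: "runs (load_input j) s0 10 (\<lambda>s. s = s1)"
    unfolding s1_def by (rule runs_loop_free) (simp_all add: loop_free_progs cost_progs)
  have "env s1" "im s1 = (\<lambda>_. 0)" "ir s1 0 = 0" "ir s1 1 = 0" "ir s1 2 = 0" "rr s1 4 = 0"
    using j unfolding s1_def env_def
    by (auto simp: load_input_def s0_def init_state_def base_x_def base_y_def stride_def)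
  note search = search_store_output_runs[OF this]
  have "runs (separation_prog j) s0 (10 + (search_cost + 2))
      (\<lambda>s'. \<exists>s2. search_post s2
         \<and> output_index s' = (ir s2 0, ir s2 1, {a. im s2 a \<noteq> 0}, base_x + stride * ir s2 2))"
    unfolding separation_prog_def by (rule runs_Seq[OF load]) (use search in blast)
  then obtain n s' s2 where run: "exec (separation_prog j) s0 n s'" "n \<le> 10 + (search_cost + 2)"
    and post: "search_post s2"
    and out: "output_index s' = (ir s2 0, ir s2 1, {a. im s2 a \<noteq> 0}, r (ir s2 2))"
    unfolding runs_def r_eq by blast
  have "violated j T L Cb Cu V Vb x y \<longrightarrow> most_violated j T L Cb Cu V Vb x y (output_index s')"
    using search_post_most_violated[OF post] most_violated_reverse[OF j] unfolding out r_def by blast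
  moreover have "n \<le> 2000 * T ^ 3" using run(2) search_cost_bound by linarith
  ultimately show ?thesis using run(1) unfolding s0_def by blast
qed

theorem proposition12:
  assumes "j \<in> {1, 2 :: nat}"
  shows "\<exists>(p :: prog) (c :: nat).
    \<forall>(T :: nat) (L :: nat) (Cb :: real) (Cu :: real) (V :: real) (Vb :: real)
      (x :: int \<Rightarrow> real) (y :: int \<Rightarrow> real).
      0 < T \<longrightarrow> 0 < L \<longrightarrow> Cb > Cu \<longrightarrow> Cu > 0 \<longrightarrow> V > 0 \<longrightarrow> Vb + V \<le> Cb
      \<longrightarrow> Cu < Vb \<longrightarrow> Vb < Cu + V
      \<longrightarrow> (\<forall>t\<in>{1..int T}. 0 \<le> x t \<and> 0 \<le> y t) \<longrightarrow>
      (\<exists>n s'. exec p (init_state T L Cb Cu V Vb x y) n s'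
          \<and> n \<le> c * T ^ 3
          \<and> ((\<exists>idx\<in>Fam j T L Cb Cu V. Viol j Cu V Vb x y idx > 0) \<longrightarrow>
               output_index s' \<in> Fam j T L Cb Cu V
               \<and> (\<forall>idx\<in>Fam j T L Cb Cu V.
                     Viol j Cu V Vb x y idx \<le> Viol j Cu V Vb x y (output_index s'))))"
  using separation_prog_correct[OF assms] unfolding violated_def most_violated_def
  by (intro exI[of _ "separation_prog j"] exI[of _ 2000]) blast

end
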